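(* For any nonempty word $\mathfrak u\in\langle\Gamma\rangle$ and $\varepsilon\in\mathbb F_q^*$, $\Delta(\varphi_\varepsilon(\mathfrak u))=(\varphi_\varepsilon\otimes\mathrm{id})(\Delta(\mathfrak u))+(\mathrm{id}\otimes\varphi_\varepsilon-\varphi_\varepsilon\otimes\mathrm{id})(1\otimes\mathfrak u)$.
   Context: Let $q$ be a prime power. Let $\Gamma=\{x_{n,\varepsilon}\}_{n\in\mathbb N,\varepsilon\in\mathbb F_q^*}$ with weights $w(x_{n,\varepsilon})=n$, $\langle\Gamma\rangle$ the set of words over $\Gamma$ (empty word $1$, juxtaposition = concatenation, depth = number of letters, weight = sum of letter weights), $\mathfrak D$ the $\mathbb F_q$-vector space with basis $\langle\Gamma\rangle$; write $x_n:=x_{n,1}$. For positive integers $r,s,j$ put $\Delta^j_{r,s}=(-1)^{r-1}\binom{j-1}{r-1}+(-1)^{s-1}\binom{j-1}{s-1}$ if $(q-1)\mid j$ and $0$ otherwise. The bilinear products $\diamond,\sqcup\!\sqcup$ on $\mathfrak D$ are defined recursively by $1\diamond\mathfrak a=\mathfrak a\diamond1=\mathfrak a$, $1\sqcup\!\sqcup\mathfrak a=\mathfrak a\sqcup\!\sqcup1=\mathfrak a$ and, for nonempty $\mathfrak a=x_{a,\alpha}\mathfrak a_-$, $\mathfrak b=x_{b,\beta}\mathfrak b_-$: $\mathfrak a\diamond\mathfrak b=x_{a+b,\alpha\beta}(\mathfrak a_-\sqcup\!\sqcup\mathfrak b_-)+\sum_{i+j=a+b}\Delta^j_{a,b}x_{i,\alpha\beta}(x_j\sqcup\!\sqcup(\mathfrak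 a_-\sqcup\!\sqcup\mathfrak b_-))$, $\mathfrak a\sqcup\!\sqcup\mathfrak b=x_{a,\alpha}(\mathfrak a_-\sqcup\!\sqcup\mathfrak b)+x_{b,\beta}(\mathfrak a\sqcup\!\sqcup\mathfrak b_-)+\mathfrak a\diamond\mathfrak b$. For a word $\mathfrak a=x_{i_1}\cdots x_{i_m}$ with all characters $1$ put $[\mathfrak a]=(-1)^m\Delta^{i_1}_{1,w(\mathfrak a)+1}\cdots\Delta^{i_m}_{1,w(\mathfrak a)+1}x_{i_1}\sqcup\!\sqcup\cdots\sqcup\!\sqcup x_{i_m}$, $[1]=1$. The coproduct $\Delta:\mathfrak D\to\mathfrak D\otimes\mathfrak D$ is linear with $\Delta(1)=1\otimes1$, $\Delta(x_{n,\varepsilon})=1\otimes x_{n,\varepsilon}+\sum_{r\ge1,\ r+w(\mathfrak a)=n}\binom{r+\mathrm{depth}(\mathfrak a)-2}{\mathrm{depth}(\mathfrak a)}x_{r,\varepsilon}\otimes[\mathfrak a]$ (sum over words $\mathfrak a$ with all characters $1$), and for $\mathfrak u=x_{u,\varepsilon}\mathfrak v$ of depth $\ge2$, writing $\Delta(x_{u,\varepsilon})=1\otimes x_{u,\varepsilon}+\sum a\otimes b$ and $\Delta(\mathfrak v)=\sum a_{\mathfrak v}\otimes b_{\mathfrak v}$, $\Delta(\mathfrak u)=1\otimes\mathfrak u+\sum(a\,a_{\mathfrak v})\otimes(b\sqcup\!\sqcup b_{\mathfrak v})$. For $\varepsilon\in\mathbb F_q^*$ the horizontal map $\varphi_\varepsilon:\mathfrak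 D\to\mathfrak D$ is linear with $\varphi_\varepsilon(1)=1$ and $\varphi_\varepsilon(x_{u,\eta}\mathfrak u_-)=x_{u,\varepsilon\eta}\mathfrak u_-$. *)

theory Defs
  imports "HOL-Library.Poly_Mapping"
begin

text \<open>The base field F_q is a finite field type 'a (q = CARD('a)).
  A letter x_{n,eps} is the pair (n, eps); words are lists of letters;
  the vector space D is the space of finitely supported functions
  from words to F_q (basis = words), and D (x) D is the space of finitely
  supported functions on pairs of words (basis = pairs of words).\<close>

type_synonym 'a letter = "nat \<times> 'a"
type_synonym 'a word = "'a letter list"
type_synonym 'a D = "'a word \<Rightarrow>\<^sub>0 'a"
type_synonym 'a DD = "('a word \<times> 'a word) \<Rightarrow>\<^sub>0 'a"

definition valid_word :: "'a::zero word \<Rightarrow> bool" where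
  "valid_word u \<longleftrightarrow> (\<forall>(n, e) \<in> set u. 0 < n \<and> e \<noteq> 0)"

definition smul :: "'a::semiring_0 \<Rightarrow> ('b \<Rightarrow>\<^sub>0 'a) \<Rightarrow> ('b \<Rightarrow>\<^sub>0 'a)" where
  "smul c p = Poly_Mapping.map ((*) c) p"

definition lin :: "('b \<Rightarrow> ('c \<Rightarrow>\<^sub>0 'a::semiring_0)) \<Rightarrow> ('b \<Rightarrow>\<^sub>0 'a) \<Rightarrow> ('c \<Rightarrow>\<^sub>0 'a)" where
  "lin f p = (\<Sum>w\<in>Poly_Mapping.keys p. smul (Poly_Mapping.lookup p w) (f w))"

definition consD :: "'a letter \<Rightarrow> 'a::semiring_1 D \<Rightarrow> 'a D" where
  "consD x p = lin (\<lambda>w. Poly_Mapping.single (x # w) 1) p"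

definition DeltaC :: "nat \<Rightarrow> nat \<Rightarrow> nat \<Rightarrow> 'a::field" where
  "DeltaC r s j = (if (card (UNIV :: 'a set) - 1) dvd j
     then of_int ((-1) ^ (r - 1) * int ((j - 1) choose (r - 1))
                 + (-1) ^ (s - 1) * int ((j - 1) choose (s - 1)))
     else 0)"

text \<open>The mutually recursive products shuffle and diamond on words, computed
  with a fuel parameter (any fuel at least 2*(total depth)+1 is enough).\<close>
fun shf :: "nat \<Rightarrow> 'a::field word \<Rightarrow> 'a word \<Rightarrow> 'a D"
and dmf :: "nat \<Rightarrow> 'a::field word \<Rightarrow> 'a word \<Rightarrow> 'a D" where
  "shf 0 a b = 0"
| "shf (Suc n) [] b = Poly_Mapping.single b 1"
| "shf (Suc n) (x # a) [] = Poly_Mapping.single (x # a) 1"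
| "shf (Suc n) (x # a) (y # b) =
     consD x (shf n a (y # b)) + consD y (shf n (x # a) b) + dmf n (x # a) (y # b)"
| "dmf 0 a b = 0"
| "dmf (Suc n) [] b = Poly_Mapping.single b 1"
| "dmf (Suc n) (x # a) [] = Poly_Mapping.single (x # a) 1"
| "dmf (Suc n) (x # a) (y # b) =
     consD (fst x + fst y, snd x * snd y) (shf n a b)
     + (\<Sum>i\<in>{1..<fst x + fst y}.
          smul (DeltaC (fst x) (fst y) (fst x + fst y - i))
            (consD (i, snd x * snd y)
               (lin (shf n [(fst x + fst y - i, 1)]) (shf n a b))))"

definition shuffle_w :: "'a::field word \<Rightarrow> 'a word \<Rightarrow> 'a D" where
  "shuffle_w a b = shf (2 * (length a + length b) + 1) a b"

definition shuffleD :: "'a::field D \<Rightarrow> 'a D \<Rightarrow> 'a D" where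
  "shuffleD p r = lin (\<lambda>a. lin (\<lambda>b. shuffle_w a b) r) p"

definition tens :: "'a::semiring_0 D \<Rightarrow> 'a D \<Rightarrow> 'a DD" where
  "tens p r = (\<Sum>u\<in>Poly_Mapping.keys p. \<Sum>v\<in>Poly_Mapping.keys r. Poly_Mapping.single (u, v) (Poly_Mapping.lookup p u * Poly_Mapping.lookup r v))"

definition tmap :: "('a::semiring_1 D \<Rightarrow> 'a D) \<Rightarrow> ('a D \<Rightarrow> 'a D) \<Rightarrow> 'a DD \<Rightarrow> 'a DD" where
  "tmap f g X = lin (\<lambda>(a, b). tens (f (Poly_Mapping.single a 1)) (g (Poly_Mapping.single b 1))) X"

text \<open>Words with all characters 1, encoded by their list of weights.\<close>
definition char1_words :: "nat \<Rightarrow> nat list set" where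
  "char1_words m = {ws. (\<forall>i\<in>set ws. 0 < i) \<and> sum_list ws = m}"

definition bracket :: "nat list \<Rightarrow> 'a::field D" where
  "bracket ws = smul ((-1) ^ length ws * prod_list (map (\<lambda>i. DeltaC 1 (sum_list ws + 1) i) ws))
     (foldr (\<lambda>i acc. shuffleD (Poly_Mapping.single [(i, 1)] 1) acc) ws (Poly_Mapping.single [] 1))"

definition coprodL :: "'a::field letter \<Rightarrow> 'a DD" where
  "coprodL x = (\<Sum>r\<in>{1..fst x}. \<Sum>ws\<in>char1_words (fst x - r).
     smul (of_nat ((r + length ws - 2) choose length ws))
       (tens (Poly_Mapping.single [(r, snd x)] 1) (bracket ws)))"

definition tmult :: "'a::field DD \<Rightarrow> 'a DD \<Rightarrow> 'a DD" where
  "tmult P Q = lin (\<lambda>(a, b). lin (\<lambda>(c, d).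
      tens (Poly_Mapping.single (a @ c) 1) (shuffle_w b d)) Q) P"

fun coprod_w :: "'a::field word \<Rightarrow> 'a DD" where
  "coprod_w [] = Poly_Mapping.single ([], []) 1"
| "coprod_w [x] = Poly_Mapping.single ([], [x]) 1 + coprodL x"
| "coprod_w (x # y # v) = Poly_Mapping.single ([], x # y # v) 1 + tmult (coprodL x) (coprod_w (y # v))"

definition coprod :: "'a::field D \<Rightarrow> 'a DD" where
  "coprod p = lin coprod_w p"

fun phi_w :: "'a::times \<Rightarrow> 'a word \<Rightarrow> 'a word" where
  "phi_w e [] = []"
| "phi_w e ((n, h) # v) = (n, e * h) # v"

definition phi :: "'a::field \<Rightarrow> 'a D \<Rightarrow> 'a D" where
  "phi e p = lin (\<lambda>w. Poly_Mapping.single (phi_w e w) 1) p"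

end

theory Submission imports Defs begin

text \<open>Every term
  of \<open>\<Delta>(u) - 1 \<otimes> u\<close> has as left factor a nonempty word whose first letter carries the
  character of the first letter of \<open>u\<close>: this holds for \<open>\<Delta>(x\<^sub>n\<^sub>,\<^sub>\<eta>) - 1 \<otimes> x\<^sub>n\<^sub>,\<^sub>\<eta>\<close>, and the
  recursion for longer words only appends further words to such left factors. Hence
  \<open>\<Delta>(\<phi>\<^sub>\<epsilon> u) - 1 \<otimes> \<phi>\<^sub>\<epsilon> u = (\<phi>\<^sub>\<epsilon> \<otimes> id)(\<Delta>(u) - 1 \<otimes> u)\<close>, while \<open>\<phi>\<^sub>\<epsilon> \<otimes> id\<close> fixes \<open>1 \<otimes> u\<close>.\<close>

lemma lookup_smul [simp]: "Poly_Mapping.lookup (smul c p) k = c * Poly_Mapping.lookup p k"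
  unfolding smul_def by transfer (simp add: when_def)

lemma smul_zero_left [simp]: "smul 0 p = 0"
  by (rule poly_mapping_eqI) simp

lemma smul_zero_right [simp]: "smul c 0 = 0"
  by (rule poly_mapping_eqI) simp

lemma smul_one [simp]: "smul (1::'a::semiring_1) p = p"
  by (rule poly_mapping_eqI) simp

lemma smul_add_left: "smul (a + b) p = smul a p + smul b p"
  by (rule poly_mapping_eqI) (simp add: lookup_add distrib_right)

lemma smul_add_right: "smul c (p + q) = smul c p + smul c q"
  by (rule poly_mapping_eqI) (simp add: lookup_add distrib_left)

lemma smul_smul: "smul (a::'a::comm_semiring_1) (smul b p) = smul (a * b) p"
  by (rule poly_mapping_eqI) (simp add: mult.assoc)

lemma smul_sum: "smul c (sum f S) = (\<Sum>x\<in>S. smul c (f x))"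
  by (induction S rule: infinite_finite_induct) (simp_all add: smul_add_right)

lemma smul_single_one: "smul c (Poly_Mapping.single k (1::'a::semiring_1)) = Poly_Mapping.single k c"
  by (rule poly_mapping_eqI) (simp add: lookup_single when_def)

lemma lin_eq_sum_superset:
  assumes "finite S" "Poly_Mapping.keys p \<subseteq> S"
  shows "lin f p = (\<Sum>w\<in>S. smul (Poly_Mapping.lookup p w) (f w))"
  unfolding lin_def
  by (rule sum.mono_neutral_left) (use assms in \<open>auto simp: in_keys_iff\<close>)

lemma lin_add: "lin f (p + q) = lin f p + lin f q"
proof -
  let ?S = "Poly_Mapping.keys p \<union> Poly_Mapping.keys q"
  have "Poly_Mapping.keys (p + q) \<subseteq> ?S" by (rule keys_add)
  then show ?thesis
    by (simp add: lin_eq_sum_superset[of ?S] lookup_add smul_add_left sum.distrib)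
qed

lemma lin_zero [simp]: "lin f 0 = 0"
  by (simp add: lin_def)

lemma lin_smul: "lin f (smul (c::'a::comm_semiring_1) p) = smul c (lin f p)"
proof -
  have keys_smul: "Poly_Mapping.keys (smul c p) \<subseteq> Poly_Mapping.keys p"
    by (auto simp: in_keys_iff)
  show ?thesis
    unfolding lin_eq_sum_superset[OF finite_keys keys_smul] by (simp add: lin_def smul_sum smul_smul)
qed

lemma lin_sum: "lin f (sum g S) = (\<Sum>x\<in>S. lin f (g x))"
  by (induction S rule: infinite_finite_induct) (simp_all add: lin_add)

lemma lin_single_one [simp]: "lin f (Poly_Mapping.single k (1::'a::semiring_1)) = f k"
  by (simp add: lin_def)

lemma lin_cong: "(\<And>w. w \<in> Poly_Mapping.keys p \<Longrightarrow> f w = g w) \<Longrightarrow> lin f p = lin g p"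
  unfolding lin_def by simp

lemma lin_lin: "lin F (lin H (p::'b \<Rightarrow>\<^sub>0 'a::comm_semiring_1)) = lin (\<lambda>k. lin F (H k)) p"
  by (simp add: lin_def[of H] lin_sum lin_smul) (simp add: lin_def)

lemma lookup_lin:
  "Poly_Mapping.lookup (lin f p) k =
     (\<Sum>w\<in>Poly_Mapping.keys p. Poly_Mapping.lookup p w * Poly_Mapping.lookup (f w) k)"
  unfolding lin_def by (simp add: lookup_sum)

lemma tens_single_one_left:
  "tens (Poly_Mapping.single a (1::'a::semiring_1)) B = lin (\<lambda>v. Poly_Mapping.single (a, v) 1) B"
  unfolding tens_def lin_def by (simp add: smul_single_one)

lemma tens_single_one_single_one [simp]:
  "tens (Poly_Mapping.single a (1::'a::semiring_1)) (Poly_Mapping.single b 1) = Poly_Mapping.single (a, b) 1"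
  by (simp add: tens_single_one_left)

lemma phi_single_one [simp]: "phi e (Poly_Mapping.single w 1) = Poly_Mapping.single (phi_w e w) 1"
  by (simp add: phi_def)

lemma phi_w_append: "a \<noteq> [] \<Longrightarrow> phi_w e (a @ c) = phi_w e a @ c"
  by (cases a) auto

definition phi_left_w :: "'a::field \<Rightarrow> 'a word \<times> 'a word \<Rightarrow> 'a DD" where
  "phi_left_w e = (\<lambda>(a, b). Poly_Mapping.single (phi_w e a, b) 1)"

lemma phi_left_w_apply [simp]: "phi_left_w e (a, b) = Poly_Mapping.single (phi_w e a, b) 1"
  by (simp add: phi_left_w_def)

lemma tmap_phi_id: "tmap (phi e) id X = lin (phi_left_w e) X"
  unfolding tmap_def phi_left_w_def by (rule lin_cong) auto

lemma lin_phi_left_w_tens: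
  "lin (phi_left_w e) (tens (Poly_Mapping.single a 1) B) = tens (Poly_Mapping.single (phi_w e a) 1) B"
  by (simp add: tens_single_one_left lin_lin)

lemma coprodL_mult_char: "coprodL (n, e * h) = lin (phi_left_w e) (coprodL (n, h))"
  unfolding coprodL_def by (simp add: lin_sum lin_smul lin_phi_left_w_tens)

lemma lookup_coprodL_Nil_left: "Poly_Mapping.lookup (coprodL x) ([], b) = 0"
  unfolding coprodL_def
  by (simp add: lookup_sum tens_single_one_left lookup_lin lookup_single)

lemma tmult_lin_phi_left_w:
  assumes "\<And>b. Poly_Mapping.lookup P ([], b) = 0"
  shows "tmult (lin (phi_left_w e) P) Q = lin (phi_left_w e) (tmult P Q)"
  unfolding tmult_def lin_lin
proof (rule lin_cong)
  fix w assume w: "w \<in> Poly_Mapping.keys P"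
  obtain a b where ab: "w = (a, b)" by force
  with w assms have "a \<noteq> []" by (auto simp: in_keys_iff)
  then show "lin (\<lambda>(a, b). lin (\<lambda>(c, d). tens (Poly_Mapping.single (a @ c) 1) (shuffle_w b d)) Q)
               (phi_left_w e w) =
             lin (phi_left_w e) ((\<lambda>(a, b). lin (\<lambda>(c, d).
               tens (Poly_Mapping.single (a @ c) 1) (shuffle_w b d)) Q) w)"
    unfolding ab by (simp add: lin_lin case_prod_beta' lin_phi_left_w_tens phi_w_append)
qed

lemma coprod_w_phi_w:
  assumes "u \<noteq> []"
  shows "coprod_w (phi_w e u) + Poly_Mapping.single ([], u) 1 =
           Poly_Mapping.single ([], phi_w e u) 1 + lin (phi_left_w e) (coprod_w u)"
proof -
  obtain n h v where u: "u = (n, h) # v" using assms by (cases u) auto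
  show ?thesis
    by (cases v) (simp_all add: u lin_add coprodL_mult_char tmult_lin_phi_left_w
        lookup_coprodL_Nil_left)
qed

theorem proposition6p2:
  fixes u :: "'a::{field, finite} word" and \<epsilon> :: 'a
  assumes "u \<noteq> []" and "valid_word u" and "\<epsilon> \<noteq> 0"
  shows "coprod (phi \<epsilon> (Poly_Mapping.single u 1)) =
           tmap (phi \<epsilon>) id (coprod (Poly_Mapping.single u 1))
         + (tmap id (phi \<epsilon>) (tens (Poly_Mapping.single [] 1) (Poly_Mapping.single u 1))
            - tmap (phi \<epsilon>) id (tens (Poly_Mapping.single [] 1) (Poly_Mapping.single u 1)))"
proof -
  have "tmap id (phi \<epsilon>) (tens (Poly_Mapping.single [] 1) (Poly_Mapping.single u 1))
      = Poly_Mapping.single ([], phi_w \<epsilon> u) 1"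
    by (simp add: tmap_def)
  moreover have "tmap (phi \<epsilon>) id (tens (Poly_Mapping.single [] 1) (Poly_Mapping.single u 1))
      = Poly_Mapping.single ([], u) 1"
    by (simp add: tmap_phi_id)
  moreover have "coprod_w (phi_w \<epsilon> u) =
      lin (phi_left_w \<epsilon>) (coprod_w u) + (Poly_Mapping.single ([], phi_w \<epsilon> u) 1 - Poly_Mapping.single ([], u) 1)"
    using coprod_w_phi_w[OF assms(1), of \<epsilon>] by (simp add: algebra_simps eq_diff_eq)
  ultimately show ?thesis
    by (simp add: coprod_def tmap_phi_id)
qed

end
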